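(* Let $A_{\mathrm{app}},B_{\mathrm{app}}\in K[X]$ with $n=\deg A_{\mathrm{app}}\ge d=\deg B_{\mathrm{app}}\ge1$, and assume that $B_{\mathrm{app}}$ has a nonzero coefficient in degree $<d$. Let $\varphi_A$ (on $[0,n]$) and $\varphi_B$ (on $[0,d]$) be Newton functions such that the precisions $O(\varphi_A)$ on $A_{\mathrm{app}}$ and $O(\varphi_B)$ on $B_{\mathrm{app}}$ are nondegenerate. Set $$\varphi=\varphi_A\,\overline{+}\,\big[\varphi_B\,\overline{\times}\,(\mathrm{NF}(A_{\mathrm{app}})\,\overline{\div}\,\mathrm{NF}(B_{\mathrm{app}}))\big],$$ and let $Q_{\mathrm{app}}=A_{\mathrm{app}}\,\mathrm{div}\,B_{\mathrm{app}}$ and $R_{\mathrm{app}}=A_{\mathrm{app}}\bmod B_{\mathrm{app}}$. Then for all $\delta A\in K_{\le n}[X]$ and $\delta B\in K_{\le d}[X]$ with $\mathrm{NF}(\delta A)\ge\varphi_A$ and $\mathrm{NF}(\delta B)\ge\varphi_B$, the polynomials $$Q=(A_{\mathrm{app}}+\delta A)\,\mathrm{div}\,(B_{\mathrm{app}}+\delta B),\qquad R=(A_{\mathrm{app}}+\delta A)\bmod(B_{\mathrm{app}}+\delta B)$$ satisfy $$\mathrm{NF}(Q-Q_{\mathrm{app}})\ge \varphi\,\overline{\div}\,\mathrm{NF}(B_{\mathrm{app}}),\qquad \mathrm{NF}(R-R_{\mathrm{app}})\ge\varphi\,\overline{\bmod}\,\mathrm{NF}(B_{\mathrm{app}}).$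$
   Context: $K$ is a complete discrete valuation field with valuation $\mathrm{val}:K\to\mathbb Z\cup\{+\infty\}$, normalized to be surjective, with $\mathrm{val}(0)=+\infty$. $K_{\le n}[X]$ denotes the polynomials of degree at most $n$. For $Q=\sum q_iX^i\in K[X]$ nonzero of degree $m$, its Newton function $\mathrm{NF}(Q):[0,m]\to\mathbb R\cup\{+\infty\}$ is the greatest convex function with $\mathrm{NF}(Q)(i)\le \mathrm{val}(q_i)$ for all integers $0\le i\le m$. Its epigraph is the Newton polygon $\mathrm{NP}(Q)$; an extremal point of $\mathrm{NP}(Q)$ is a vertex of this epigraph. For a convex function $g$ on $[0,M]$ and a polynomial $Q$ of degree $\le M$, "$\mathrm{NF}(Q)\ge g$" means $\mathrm{val}(q_i)\ge g(i)$ for all integers $0\le i\le M$. A Newton function of degree $n$ is a convex, piecewise affine function $[0,n]\to\mathbb R\cup\{+\infty\}$, finite at $n$, whose epigraph has extremal points with integral abscissae. Given $P_{\mathrm{app}}$ of degree $n$ and a Newton function $\varphi_P$ of degree $n$, the precision $O(\varphi_P)$ on $P_{\mathrm{app}}$ is nondegenerate if $\varphi_P\ge\mathrm{NF}(P_{\mathrm{app}})$ and $\varphi_P(x)>y$ for every extremal point $(x,y)$ of $\mathrm{NP}(P_{\mathrm{app}})$. $A\,\mathrm{div}\,B$ and $A\bmod B$ are the quotient and remainder of Euclidean division: $A=(A\,\mathrm{div}\,B)B+(A\bmod B)$ with $\deg(A\bmod B)<\deg B$. Operations on convex functions: - $\varphi\,\overline{+}\,\psi$ is the greatest convex function below both $\varphi$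 and $\psi$; its epigraph is the convex hull of the union of the epigraphs. - $\varphi\,\overline{\times}\,\psi$, for $\varphi$ on $[0,n]$ and $\psi$ on $[0,m]$, is the function on $[0,n+m]$ given by $(\varphi\,\overline{\times}\,\psi)(x)=\inf_{y+z=x}\varphi(y)+\psi(z)$. Euclidean division of Newton functions: let $\varphi$ be convex on $[0,n]$, finite at $n$, and $\psi$ convex on $[0,d]$ with $1\le d\le n$ and $\psi(d-1),\psi(d)$ finite. Set $\lambda=\psi(d)-\psi(d-1)$. Let $\Delta$ be the greatest affine function of slope $\lambda$ with $\Delta\le\varphi$ on $[d,n]$, and set $\delta=\Delta(d)-\psi(d)$. Define - $\varphi\,\overline{\bmod}\,\psi=\varphi|_{[0,d-1]}\,\overline{+}\,(\psi|_{[0,d-1]}+\delta)$ on $[0,d-1]$; - $(\varphi\,\overline{\div}\,\psi)(x)=\inf_{h\ge0,\ x+d+h\le n}\big(\varphi(x+d+h)-\lambda h\big)-\psi(d)$ for $x\in[0,n-d]$. *)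

theory Defs
  imports "HOL-Analysis.Analysis" "HOL-Computational_Algebra.Polynomial"
begin

definition discrete_valuation :: "('a::field \<Rightarrow> ereal) \<Rightarrow> bool" where
  "discrete_valuation val \<longleftrightarrow>
     (\<forall>x. val x = \<infinity> \<longleftrightarrow> x = 0) \<and>
     (\<forall>x y. val (x * y) = val x + val y) \<and>
     (\<forall>x y. min (val x) (val y) \<le> val (x + y)) \<and>
     range val = insert \<infinity> (range (\<lambda>k::int. ereal (of_int k)))"

definition complete_dvf :: "('a::field \<Rightarrow> ereal) \<Rightarrow> bool" where
  "complete_dvf val \<longleftrightarrow> discrete_valuation val \<and>
     (\<forall>s::nat \<Rightarrow> 'a.
        (\<forall>N::int. \<exists>M. \<forall>i\<ge>M. \<forall>j\<ge>M. ereal (of_int N) \<le> val (s i - s j)) \<longrightarrow>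
        (\<exists>L. \<forall>N::int. \<exists>M. \<forall>i\<ge>M. ereal (of_int N) \<le> val (s i - L)))"

definition conv_fun :: "real \<Rightarrow> (real \<Rightarrow> ereal) \<Rightarrow> bool" where
  "conv_fun N g \<longleftrightarrow> (\<forall>x\<in>{0..N}. g x \<noteq> -\<infinity>) \<and>
     (\<forall>x\<in>{0..N}. \<forall>y\<in>{0..N}. \<forall>t\<in>{0..1}.
        g ((1 - t) * x + t * y) \<le> ereal (1 - t) * g x + ereal t * g y)"

definition newton_fun :: "('a::zero \<Rightarrow> ereal) \<Rightarrow> 'a poly \<Rightarrow> real \<Rightarrow> ereal" where
  "newton_fun val Q x =
     (SUP g \<in> {g. conv_fun (real (degree Q)) g \<and>
                  (\<forall>i\<le>degree Q. g (real i) \<le> val (coeff Q i))}. g x)"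

text \<open>"NF(Q) >= g" for g on [0,M]: val(q_i) >= g(i) for all integers 0 <= i <= M.\<close>
definition coeffs_ge :: "('a::zero \<Rightarrow> ereal) \<Rightarrow> nat \<Rightarrow> 'a poly \<Rightarrow> (real \<Rightarrow> ereal) \<Rightarrow> bool" where
  "coeffs_ge val M Q g \<longleftrightarrow> (\<forall>i\<le>M. g (real i) \<le> val (coeff Q i))"

definition epi :: "real \<Rightarrow> (real \<Rightarrow> ereal) \<Rightarrow> (real \<times> real) set" where
  "epi N f = {(x, y). x \<in> {0..N} \<and> f x \<le> ereal y}"

definition newton_polygon :: "('a::zero \<Rightarrow> ereal) \<Rightarrow> 'a poly \<Rightarrow> (real \<times> real) set" where
  "newton_polygon val Q = epi (real (degree Q)) (newton_fun val Q)"

definition newton_function :: "nat \<Rightarrow> (real \<Rightarrow> ereal) \<Rightarrow> bool" where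
  "newton_function n f \<longleftrightarrow>
     conv_fun (real n) f \<and> f (real n) \<noteq> \<infinity> \<and>
     (\<exists>a\<in>{0..real n}. \<exists>L::(real \<times> real) set. finite L \<and> L \<noteq> {} \<and>
        (\<forall>x\<in>{0..real n}. (x < a \<longrightarrow> f x = \<infinity>) \<and>
           (a \<le> x \<longrightarrow> f x = ereal (Max ((\<lambda>(\<alpha>, \<beta>). \<alpha> * x + \<beta>) ` L))))) \<and>
     (\<forall>p. p extreme_point_of (epi (real n) f) \<longrightarrow> fst p \<in> \<int>)"

definition nondegenerate :: "('a::zero \<Rightarrow> ereal) \<Rightarrow> 'a poly \<Rightarrow> (real \<Rightarrow> ereal) \<Rightarrow> bool" where
  "nondegenerate val P \<phi> \<longleftrightarrow>
     (\<forall>x\<in>{0..real (degree P)}. newton_fun val P x \<le> \<phi> x) \<and>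
     (\<forall>p. p extreme_point_of (newton_polygon val P) \<longrightarrow> ereal (snd p) < \<phi> (fst p))"

definition conv_plus :: "real \<Rightarrow> (real \<Rightarrow> ereal) \<Rightarrow> (real \<Rightarrow> ereal) \<Rightarrow> real \<Rightarrow> ereal" where
  "conv_plus N f g x =
     (SUP h \<in> {h. conv_fun N h \<and> (\<forall>y\<in>{0..N}. h y \<le> f y \<and> h y \<le> g y)}. h x)"

definition conv_times :: "real \<Rightarrow> real \<Rightarrow> (real \<Rightarrow> ereal) \<Rightarrow> (real \<Rightarrow> ereal) \<Rightarrow> real \<Rightarrow> ereal" where
  "conv_times n m f g x =
     (INF yz \<in> {(y, z). y \<in> {0..n} \<and> z \<in> {0..m} \<and> y + z = x}. f (fst yz) + g (snd yz))"

definition nf_slope :: "real \<Rightarrow> (real \<Rightarrow> ereal) \<Rightarrow> ereal" where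
  "nf_slope d \<psi> = \<psi> d - \<psi> (d - 1)"

text \<open>delta = Delta(d) - psi(d), Delta the greatest affine function of slope lambda
  below phi on [d,n], written Delta(x) = c + lambda (x - d).\<close>
definition nf_delta :: "real \<Rightarrow> real \<Rightarrow> (real \<Rightarrow> ereal) \<Rightarrow> (real \<Rightarrow> ereal) \<Rightarrow> ereal" where
  "nf_delta n d \<phi> \<psi> =
     ereal (Sup {c::real. \<forall>x\<in>{d..n}. ereal c + nf_slope d \<psi> * ereal (x - d) \<le> \<phi> x}) - \<psi> d"

definition nf_mod :: "real \<Rightarrow> real \<Rightarrow> (real \<Rightarrow> ereal) \<Rightarrow> (real \<Rightarrow> ereal) \<Rightarrow> real \<Rightarrow> ereal" where
  "nf_mod n d \<phi> \<psi> = conv_plus (d - 1) \<phi> (\<lambda>x. \<psi> x + nf_delta n d \<phi> \<psi>)"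

definition nf_div :: "real \<Rightarrow> real \<Rightarrow> (real \<Rightarrow> ereal) \<Rightarrow> (real \<Rightarrow> ereal) \<Rightarrow> real \<Rightarrow> ereal" where
  "nf_div n d \<phi> \<psi> x =
     (INF h \<in> {h::real. 0 \<le> h \<and> x + d + h \<le> n}. \<phi> (x + d + h) - nf_slope d \<psi> * ereal h) - \<psi> d"

end

theory Submission
  imports Defs
begin

(* Long division by a polynomial B preserves lower bounds on the valuations of coefficients.
   If those of B lie above a convex function psi with last slope lambda that is exact at the
   leading coefficient, each division step subtracts a multiple of B whose coefficients lie
   above the line of slope lambda through the current leading term; so a bound that grows at
   least with slope lambda survives.  This gives NF(P div B) >= phi div-bar psi whenever
   NF(P) >= phi, and then NF(P mod B) >= phi mod-bar psi from P mod B = P - (P div B) B.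
   Now put B = B_app + dB and P = dA - (A_app div B_app) dB.  Nondegeneracy keeps the leading
   coefficient of B_app dominant, so psi = NF(B_app) still works for B, and since
   A_app + dA = (A_app mod B_app + P) + (A_app div B_app) B, the errors on quotient and
   remainder are P div B and P mod B.  Finally NF(P) >= phi by the bound for the exact
   division A_app div B_app. *)

section \<open>Convex functions on an interval\<close>

lemma conv_fun_affine: "conv_fun N (\<lambda>x. ereal (a + b * x))"
  unfolding conv_fun_def by (auto simp: algebra_simps)

lemma conv_fun_le_chord:
  assumes "conv_fun N g" "0 \<le> x" "x < y" "y \<le> N" "x \<le> z" "z \<le> y"
    and "g x = ereal a" "g y = ereal b"
  shows "g z \<le> ereal (a + (b - a) * ((z - x) / (y - x)))"
proof -
  define t where "t = (z - x) / (y - x)"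
  have t: "t \<in> {0..1}" using assms(3,5,6) by (auto simp: t_def field_simps)
  have "(1 - t) * x + t * y = x + t * (y - x)" by (simp add: algebra_simps)
  then have "z = (1 - t) * x + t * y" using assms(3) by (simp add: t_def)
  then have "g z \<le> ereal (1 - t) * g x + ereal t * g y"
    using assms(1-6) t unfolding conv_fun_def by auto
  also have "\<dots> = ereal (a + (b - a) * t)"
    using assms(7,8) by (simp add: algebra_simps)
  finally show ?thesis by (simp add: t_def)
qed

lemma convex_comb_eq_upper:
  fixes u p q c :: real
  assumes "0 < u" "u < 1" "p \<le> c" "q \<le> c" "(1 - u) * p + u * q = c"
  shows "p = c" "q = c"
proof -
  have "(1 - u) * p \<le> (1 - u) * c" "u * q \<le> u * c"
    using assms by (simp_all add: mult_left_mono)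
  moreover have "(1 - u) * c + u * c = c" by (simp add: algebra_simps)
  ultimately have "(1 - u) * p = (1 - u) * c" "u * q = u * c" using assms(5) by linarith+
  then show "p = c" "q = c" using assms(1,2) by simp_all
qed

context
  fixes g :: "real \<Rightarrow> ereal" and d :: nat and lam :: real
  assumes conv: "conv_fun (real d) g" and d_pos: "1 \<le> d"
    and slope: "nf_slope (real d) g = ereal lam"
begin

lemma conv_fun_last_values:
  obtains a where "g (real d) = ereal a" "g (real d - 1) = ereal (a - lam)"
proof -
  have "g (real d) \<noteq> -\<infinity>" "g (real d - 1) \<noteq> -\<infinity>"
    using conv d_pos unfolding conv_fun_def by auto
  with slope that show thesis
    unfolding nf_slope_def by (cases "g (real d)"; cases "g (real d - 1)") auto
qed

lemma conv_fun_above_last_slope: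
  assumes "m \<le> d" shows "g (real d) + ereal (lam * (real m - real d)) \<le> g (real m)"
proof -
  obtain a where a: "g (real d) = ereal a" "g (real d - 1) = ereal (a - lam)"
    using conv_fun_last_values .
  show ?thesis
  proof (cases "g (real m)")
    case (real r)
    show ?thesis
    proof (cases "m = d")
      case False
      then have "g (real d - 1) \<le> ereal (r + (a - r) * ((real d - 1 - real m) / (real d - real m)))"
        using conv_fun_le_chord[OF conv, of "real m" "real d" "real d - 1" r a] assms real a
        by auto
      with a False assms have "(a - r) / (real d - real m) \<le> lam"
        by (simp add: field_simps)
      with False assms have "a - r \<le> lam * (real d - real m)"
        by (simp add: field_simps)
      with a real show ?thesis by (simp add: algebra_simps)
    qed (use a real in simp)
  next
    case MInf then show ?thesis using conv assms unfolding conv_fun_def by auto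
  qed simp
qed

lemma conv_fun_below_last_slope:
  assumes "k \<le> i" "i \<le> d" shows "g (real i) \<le> g (real k) + ereal (lam * (real i - real k))"
proof (cases "g (real k)")
  case (real r)
  obtain a where a: "g (real d) = ereal a" using conv_fun_last_values by metis
  have above: "a + lam * (real k - real d) \<le> r"
    using conv_fun_above_last_slope[of k] assms a real by simp
  consider "k = i" | "i = d" | "k < i" "i < d" using assms by linarith
  then show ?thesis
  proof cases
    case 3
    then have "g (real i) \<le> ereal (r + (a - r) * ((real i - real k) / (real d - real k)))"
      using conv_fun_le_chord[OF conv, of "real k" "real d" "real i" r a] real a by auto
    also have "(a - r) * ((real i - real k) / (real d - real k)) \<le> lam * (real i - real k)"
    proof -
      have "a - r \<le> lam * (real d - real k)" using above by (simp add: algebra_simps)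
      then have "(a - r) * ((real i - real k) / (real d - real k))
          \<le> lam * (real d - real k) * ((real i - real k) / (real d - real k))"
        using 3 by (intro mult_right_mono) auto
      then show ?thesis using 3 by simp
    qed
    finally show ?thesis using real by simp
  qed (use a real above in \<open>auto simp: algebra_simps\<close>)
next
  case MInf then show ?thesis using conv assms unfolding conv_fun_def by auto
qed simp

end

section \<open>Operations on convex functions\<close>

lemma conv_plus_le_left: "x \<in> {0..N} \<Longrightarrow> conv_plus N f g x \<le> f x"
  unfolding conv_plus_def by (auto intro!: SUP_least)

lemma conv_plus_le_right: "x \<in> {0..N} \<Longrightarrow> conv_plus N f g x \<le> g x"
  unfolding conv_plus_def by (auto intro!: SUP_least)

lemma conv_plus_greatest:
  "conv_fun N h \<Longrightarrow> (\<And>y. y \<in> {0..N} \<Longrightarrow> h y \<le> f y \<and> h y \<le> g y) \<Longrightarrow> h x \<le> conv_plus N f g x"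
  unfolding conv_plus_def by (rule SUP_upper) auto

lemma conv_plus_ge_const:
  "(\<And>y. y \<in> {0..N} \<Longrightarrow> ereal C \<le> f y \<and> ereal C \<le> g y) \<Longrightarrow> ereal C \<le> conv_plus N f g x"
  using conv_plus_greatest[of N "\<lambda>_. ereal C"] conv_fun_affine[of N C 0] by simp

lemma conv_times_le: "y \<in> {0..n} \<Longrightarrow> z \<in> {0..m} \<Longrightarrow> conv_times n m f g (y + z) \<le> f y + g z"
  unfolding conv_times_def by (rule INF_lower2[of "(y, z)"]) auto

lemma conv_times_ge:
  assumes "\<And>y. y \<in> {0..n} \<Longrightarrow> ereal a \<le> f y" "\<And>z. z \<in> {0..m} \<Longrightarrow> ereal b \<le> g z"
  shows "ereal (a + b) \<le> conv_times n m f g x"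
  unfolding conv_times_def
proof (rule INF_greatest, clarify)
  fix y z assume "y \<in> {0..n}" "z \<in> {0..m}"
  then show "ereal (a + b) \<le> f (fst (y, z)) + g (snd (y, z))"
    using add_mono[OF assms] by simp
qed

text \<open>The greatest minorant of \<open>\<phi>\<close> that increases at least with slope \<open>lam\<close>.\<close>

definition slope_minorant :: "real \<Rightarrow> real \<Rightarrow> (real \<Rightarrow> ereal) \<Rightarrow> real \<Rightarrow> ereal" where
  "slope_minorant N lam \<phi> x = (INF h \<in> {h. 0 \<le> h \<and> x + h \<le> N}. \<phi> (x + h) - ereal (lam * h))"

lemma nf_div_eq_slope_minorant:
  "nf_slope d \<psi> = ereal lam \<Longrightarrow> nf_div N d \<phi> \<psi> x = slope_minorant N lam \<phi> (x + d) - \<psi> d"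
  unfolding nf_div_def slope_minorant_def by simp

lemma slope_minorant_le: "x \<le> N \<Longrightarrow> slope_minorant N lam \<phi> x \<le> \<phi> x"
  unfolding slope_minorant_def by (rule INF_lower2[of 0]) (auto simp: zero_ereal_def[symmetric])

lemma slope_minorant_increment:
  assumes "0 \<le> h"
  shows "slope_minorant N lam \<phi> x + ereal (lam * h) \<le> slope_minorant N lam \<phi> (x + h)"
  unfolding slope_minorant_def[of N lam \<phi> "x + h"]
proof (rule INF_greatest, clarify)
  fix h' assume h': "0 \<le> h'" "x + h + h' \<le> N"
  have "slope_minorant N lam \<phi> x \<le> \<phi> (x + (h + h')) - ereal (lam * (h + h'))"
    unfolding slope_minorant_def using assms h' by (intro INF_lower) (auto simp: add.assoc)
  then show "slope_minorant N lam \<phi> x + ereal (lam * h) \<le> \<phi> (x + h + h') - ereal (lam * h')"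
    by (cases "\<phi> (x + h + h')"; cases "slope_minorant N lam \<phi> x") (auto simp: algebra_simps)
qed

lemma slope_minorant_ge_affine:
  assumes "\<And>y. y \<in> {d..N} \<Longrightarrow> ereal (c + lam * (y - d)) \<le> \<phi> y" "d \<le> x"
  shows "ereal (c + lam * (x - d)) \<le> slope_minorant N lam \<phi> x"
  unfolding slope_minorant_def
proof (rule INF_greatest, clarify)
  fix h assume "0 \<le> h" "x + h \<le> N"
  then have "ereal (c + lam * (x + h - d)) \<le> \<phi> (x + h)" using assms by auto
  then show "ereal (c + lam * (x - d)) \<le> \<phi> (x + h) - ereal (lam * h)"
    by (cases "\<phi> (x + h)") (auto simp: algebra_simps)
qed

lemma slope_minorant_ge_const:
  assumes "\<And>y. y \<in> {x..N} \<Longrightarrow> ereal C \<le> \<phi> y" "0 \<le> x"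
  shows "ereal (C - \<bar>lam\<bar> * N) \<le> slope_minorant N lam \<phi> x"
  unfolding slope_minorant_def
proof (rule INF_greatest, clarify)
  fix h assume h: "0 \<le> h" "x + h \<le> N"
  have "lam * h \<le> \<bar>lam\<bar> * h" using h by (simp add: mult_right_mono)
  also have "\<dots> \<le> \<bar>lam\<bar> * N" using h assms(2) by (simp add: mult_left_mono)
  finally have "lam * h \<le> \<bar>lam\<bar> * N" .
  moreover have "ereal C \<le> \<phi> (x + h)" using assms(1) h by simp
  ultimately show "ereal (C - \<bar>lam\<bar> * N) \<le> \<phi> (x + h) - ereal (lam * h)"
    by (cases "\<phi> (x + h)") simp_all
qed

lemma nf_div_bounded_below:
  assumes "\<And>x. ereal C \<le> \<phi> x" "nf_slope d \<psi> = ereal lam" "\<psi> d = ereal b" "0 \<le> d" "0 \<le> z"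
  shows "ereal (C - \<bar>lam\<bar> * N - b) \<le> nf_div N d \<phi> \<psi> z"
proof -
  have "ereal (C - \<bar>lam\<bar> * N) \<le> slope_minorant N lam \<phi> (z + d)"
    using assms by (intro slope_minorant_ge_const) auto
  then have "ereal (C - \<bar>lam\<bar> * N) - ereal b \<le> slope_minorant N lam \<phi> (z + d) - ereal b"
    by (rule ereal_minus_mono) simp
  then show ?thesis using nf_div_eq_slope_minorant[OF assms(2)] assms(3) by simp
qed

lemma nf_div_ge_affine:
  assumes "\<And>x. x \<in> {d..N} \<Longrightarrow> ereal (c + lam * (x - d)) \<le> \<phi> x"
    and "nf_slope d \<psi> = ereal lam" "\<psi> d = ereal b" "0 \<le> z"
  shows "ereal (c + lam * z - b) \<le> nf_div N d \<phi> \<psi> z"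
proof -
  have "ereal (c + lam * (z + d - d)) \<le> slope_minorant N lam \<phi> (z + d)"
    using assms(1,4) by (intro slope_minorant_ge_affine) auto
  then show ?thesis
    using nf_div_eq_slope_minorant[OF assms(2)] assms(3)
    by (cases "slope_minorant N lam \<phi> (z + d)") auto
qed

lemma nf_delta_affine_minorant:
  assumes lower: "\<And>x. x \<in> {d..N} \<Longrightarrow> ereal C \<le> \<phi> x"
    and slope: "nf_slope d \<psi> = ereal lam" and "\<psi> d = ereal b"
  obtains c where "nf_delta N d \<phi> \<psi> = ereal (c - b)"
    and "\<And>x. x \<in> {d..N} \<Longrightarrow> ereal (c + lam * (x - d)) \<le> \<phi> x"
proof -
  define S where "S = {c. \<forall>x\<in>{d..N}. ereal c + nf_slope d \<psi> * ereal (x - d) \<le> \<phi> x}"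
  have S_iff: "c \<in> S \<longleftrightarrow> (\<forall>x\<in>{d..N}. ereal (c + lam * (x - d)) \<le> \<phi> x)" for c
    unfolding S_def slope by simp
  have "C - \<bar>lam\<bar> * (N - d) \<in> S"
    unfolding S_iff
  proof
    fix x assume x: "x \<in> {d..N}"
    have "lam * (x - d) \<le> \<bar>lam\<bar> * (x - d)" using x by (simp add: mult_right_mono)
    also have "\<dots> \<le> \<bar>lam\<bar> * (N - d)" using x by (simp add: mult_left_mono)
    finally have "ereal (C - \<bar>lam\<bar> * (N - d) + lam * (x - d)) \<le> ereal C" by simp
    then show "ereal (C - \<bar>lam\<bar> * (N - d) + lam * (x - d)) \<le> \<phi> x"
      using lower[OF x] by (rule order_trans)
  qed
  then have "S \<noteq> {}" by blast
  \<comment> \<open>If \<open>\<phi> = \<infinity>\<close> on \<open>[d, N]\<close>, then \<open>S\<close> is unbounded and \<open>Sup S\<close> is junk,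
    but the bound below is then vacuous.\<close>
  show thesis
  proof
    show "nf_delta N d \<phi> \<psi> = ereal (Sup S - b)" unfolding nf_delta_def S_def using assms(3) by simp
    fix x assume x: "x \<in> {d..N}"
    show "ereal (Sup S + lam * (x - d)) \<le> \<phi> x"
    proof (cases "\<phi> x")
      case (real w)
      have "Sup S \<le> w - lam * (x - d)"
      proof (rule cSup_least[OF \<open>S \<noteq> {}\<close>])
        fix c assume "c \<in> S"
        then have "ereal (c + lam * (x - d)) \<le> ereal w" using x real unfolding S_iff by metis
        then show "c \<le> w - lam * (x - d)" by simp
      qed
      then show ?thesis using real by simp
    qed (use lower[OF x] in simp_all)
  qed
qed

section \<open>Newton functions and Newton polygons\<close>

lemma newton_fun_greatest:
  assumes "conv_fun (real (degree Q)) g" "\<And>i. i \<le> degree Q \<Longrightarrow> g (real i) \<le> val (coeff Q i)"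
  shows "g x \<le> newton_fun val Q x"
  unfolding newton_fun_def by (rule SUP_upper) (use assms in auto)

lemma newton_fun_le_coeff: "i \<le> degree Q \<Longrightarrow> newton_fun val Q (real i) \<le> val (coeff Q i)"
  unfolding newton_fun_def by (rule SUP_least) auto

lemma newton_fun_convex:
  assumes "x \<in> {0..real (degree Q)}" "y \<in> {0..real (degree Q)}" "t \<in> {0..1}"
  shows "newton_fun val Q ((1 - t) * x + t * y)
    \<le> ereal (1 - t) * newton_fun val Q x + ereal t * newton_fun val Q y"
  unfolding newton_fun_def[of val Q "(1 - t) * x + t * y"]
proof (rule SUP_least)
  fix g
  assume g: "g \<in> {g. conv_fun (real (degree Q)) g \<and> (\<forall>i\<le>degree Q. g (real i) \<le> val (coeff Q i))}"
  then have "g ((1 - t) * x + t * y) \<le> ereal (1 - t) * g x + ereal t * g y"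
    using assms unfolding conv_fun_def by blast
  also have "\<dots> \<le> ereal (1 - t) * newton_fun val Q x + ereal t * newton_fun val Q y"
    using assms(3) g by (intro add_mono ereal_mult_left_mono newton_fun_greatest) auto
  finally show "g ((1 - t) * x + t * y) \<le> \<dots>" .
qed

lemma extreme_point_newton_polygon_degree:
  assumes "newton_fun val Q (real (degree Q)) = ereal v"
  shows "(real (degree Q), v) extreme_point_of newton_polygon val Q"
  unfolding extreme_point_of_def
proof safe
  show "(real (degree Q), v) \<in> newton_polygon val Q"
    unfolding newton_polygon_def epi_def using assms by simp
next
  fix a b assume ab: "a \<in> newton_polygon val Q" "b \<in> newton_polygon val Q"
    and "(real (degree Q), v) \<in> open_segment a b"
  then obtain u where u: "0 < u" "u < 1" "(real (degree Q), v) = (1 - u) *\<^sub>R a + u *\<^sub>R b"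
    and "a \<noteq> b" unfolding in_segment by blast
  obtain xa ya xb yb where ab_eq: "a = (xa, ya)" "b = (xb, yb)" by fastforce
  have x: "xa \<le> real (degree Q)" "xb \<le> real (degree Q)" "(1 - u) * xa + u * xb = real (degree Q)"
    using ab u(3) unfolding ab_eq newton_polygon_def epi_def by auto
  then have "xa = real (degree Q)" "xb = real (degree Q)"
    using convex_comb_eq_upper[OF u(1,2)] by blast+
  then have "- ya \<le> - v" "- yb \<le> - v" "(1 - u) * - ya + u * - yb = - v"
    using ab u(3) assms unfolding ab_eq newton_polygon_def epi_def by (auto simp: algebra_simps)
  then have "- ya = - v" "- yb = - v"
    using convex_comb_eq_upper[OF u(1,2), of "- ya" "- v" "- yb"] by simp_all
  then have "ya = v" "yb = v" by simp_all
  with \<open>a \<noteq> b\<close> show False using \<open>xa = _\<close> \<open>xb = _\<close> ab_eq by simp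
qed

lemma coeffs_ge_mono:
  "coeffs_ge val M Q g \<Longrightarrow> (\<And>i. i \<le> M \<Longrightarrow> f (real i) \<le> g (real i)) \<Longrightarrow> coeffs_ge val M Q f"
  unfolding coeffs_ge_def using order_trans by blast

text \<open>The properties of \<open>NF(B)\<close> used by the division bounds.  Unlike \<open>NF(B)\<close> itself,
  they survive a nondegenerate perturbation of \<open>B\<close>.\<close>

definition newton_minorant :: "('a::zero \<Rightarrow> ereal) \<Rightarrow> 'a poly \<Rightarrow> (real \<Rightarrow> ereal) \<Rightarrow> bool" where
  "newton_minorant val B \<psi> \<longleftrightarrow> conv_fun (real (degree B)) \<psi> \<and>
     (\<forall>i\<le>degree B. \<psi> (real i) \<le> val (coeff B i)) \<and> \<psi> (real (degree B)) = val (lead_coeff B)"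

lemma newton_minorant_above_last_slope:
  assumes "newton_minorant val B \<psi>" "1 \<le> degree B" "nf_slope (real (degree B)) \<psi> = ereal lam"
    and "i \<le> degree B"
  shows "val (lead_coeff B) + ereal (lam * (real i - real (degree B))) \<le> val (coeff B i)"
  using assms conv_fun_above_last_slope[of "degree B" \<psi> lam i]
  unfolding newton_minorant_def by (metis order_trans)

section \<open>Euclidean division of polynomials\<close>

lemma degree_division_step_less:
  fixes P B :: "'a::field poly"
  defines "P' \<equiv> P - monom (lead_coeff P / lead_coeff B) (degree P - degree B) * B"
  assumes "B \<noteq> 0" "degree B \<le> degree P" "P' \<noteq> 0"
  shows "degree P' < degree P"
proof -
  let ?M = "monom (lead_coeff P / lead_coeff B) (degree P - degree B) * B"
  have "degree ?M \<le> (degree P - degree B) + degree B"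
    using degree_mult_le[of "monom (lead_coeff P / lead_coeff B) (degree P - degree B)" B]
      degree_monom_le[of "lead_coeff P / lead_coeff B" "degree P - degree B"] by linarith
  then have "degree ?M \<le> degree P" using assms(3) by simp
  moreover have "coeff ?M (degree P) = lead_coeff P"
    using assms(2,3) by (simp add: coeff_monom_mult)
  ultimately show ?thesis
    using assms(4) unfolding P'_def
    by (intro degree_less_if_less_eqI) (simp_all add: degree_diff_le)
qed

lemma degree_div_le: "degree (p div q) \<le> degree p - degree q"
  for p q :: "'a::field poly"
proof (cases "q = 0 \<or> p div q = 0")
  case False
  then have deg: "degree (p div q * q) = degree (p div q) + degree q"
    by (simp add: degree_mult_eq)
  have "degree p = degree (p div q * q)"
  proof (cases "p mod q = 0")
    case True
    then show ?thesis by (metis add_0_right div_mult_mod_eq)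
  next
    case False
    then have "degree (p mod q) < degree (p div q * q)"
      using \<open>\<not> (q = 0 \<or> p div q = 0)\<close> degree_mod_less[of q p] deg by auto
    then show ?thesis
      using degree_add_eq_left[of "p mod q" "p div q * q"] by simp
  qed
  then show ?thesis using deg by simp
qed auto

lemma div_mod_perturbation:
  fixes A B dA dB :: "'a::field poly"
  assumes "B \<noteq> 0" "B + dB \<noteq> 0" and "degree (B + dB) = degree B"
  shows "(A + dA) div (B + dB) - A div B = (dA - A div B * dB) div (B + dB)"
    and "(A + dA) mod (B + dB) - A mod B = (dA - A div B * dB) mod (B + dB)"
proof -
  define P where "P = dA - A div B * dB"
  have eq: "A + dA = (A mod B + P) + A div B * (B + dB)"
    unfolding P_def by (simp add: algebra_simps)
  have "degree (A mod B) < degree (B + dB) \<or> A mod B = 0"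
    using degree_mod_less[OF assms(1), of A] assms(3) by auto
  then have R: "A mod B div (B + dB) = 0" "A mod B mod (B + dB) = A mod B"
    by (auto simp: div_poly_less mod_poly_less)
  from assms(2) show "(A + dA) div (B + dB) - A div B = P div (B + dB)"
    unfolding eq by (simp add: div_mult_self1 poly_div_add_left R)
  show "(A + dA) mod (B + dB) - A mod B = P mod (B + dB)"
    unfolding eq by (simp add: poly_mod_add_left R)
qed

section \<open>Valuations\<close>

locale discrete_valued =
  fixes val :: "'a::field \<Rightarrow> ereal"
  assumes discrete_valuation: "discrete_valuation val"
begin

lemma val_eq_infinity_iff: "val x = \<infinity> \<longleftrightarrow> x = 0"
  using discrete_valuation unfolding discrete_valuation_def by blast

lemma val_zero [simp]: "val 0 = \<infinity>"
  by (simp add: val_eq_infinity_iff)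

lemma val_mult: "val (x * y) = val x + val y"
  using discrete_valuation unfolding discrete_valuation_def by blast

lemma val_add_ge_min: "min (val x) (val y) \<le> val (x + y)"
  using discrete_valuation unfolding discrete_valuation_def by blast

lemma val_neq_minf [simp]: "val x \<noteq> -\<infinity>"
proof -
  have "val x \<in> insert \<infinity> (range (\<lambda>k::int. ereal (of_int k)))"
    using discrete_valuation unfolding discrete_valuation_def by blast
  then show ?thesis by auto
qed

lemma val_finite:
  assumes "x \<noteq> 0" obtains r where "val x = ereal r"
  using assms val_neq_minf[of x] val_eq_infinity_iff[of x] by (cases "val x") auto

lemma val_one: "val 1 = 0"
proof -
  obtain r where "val 1 = ereal r" using val_finite[of 1] by auto
  moreover have "val 1 = val 1 + val 1" using val_mult[of 1 1] by simp
  ultimately show ?thesis by (simp add: zero_ereal_def)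
qed

lemma val_uminus [simp]: "val (- x) = val x"
proof -
  obtain r where r: "val (-1) = ereal r" using val_finite[of "-1"] by auto
  have "val 1 = val (-1) + val (-1)" using val_mult[of "-1" "-1"] by simp
  with r val_one have "val (-1) = 0" by (simp add: zero_ereal_def)
  then show ?thesis using val_mult[of "-1" x] by simp
qed

lemma val_add_ge: "c \<le> val x \<Longrightarrow> c \<le> val y \<Longrightarrow> c \<le> val (x + y)"
  using val_add_ge_min[of x y] by (meson min.bounded_iff order_trans)

lemma val_diff_ge: "c \<le> val x \<Longrightarrow> c \<le> val y \<Longrightarrow> c \<le> val (x - y)"
  using val_add_ge[of c x "- y"] by simp

lemma val_sum_ge: "(\<And>i. i \<in> I \<Longrightarrow> c \<le> val (f i)) \<Longrightarrow> c \<le> val (sum f I)"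
  by (induction I rule: infinite_finite_induct) (auto intro: val_add_ge)

lemma val_add_eq_left:
  assumes "val x < val y" shows "val (x + y) = val x"
proof (rule antisym)
  have "min (val (x + y)) (val y) \<le> val x"
    using val_add_ge_min[of "x + y" "- y"] by simp
  with assms show "val (x + y) \<le> val x" by (auto simp: min_def split: if_splits)
  show "val x \<le> val (x + y)" using val_add_ge_min[of x y] assms by simp
qed

lemma coeff_bounded_below:
  obtains C where "\<And>i. ereal C \<le> val (coeff Q i)"
proof -
  define C where "C = Min (real_of_ereal ` val ` coeff Q ` {..degree Q})"
  have "ereal C \<le> val (coeff Q i)" for i
  proof (cases "i \<le> degree Q")
    case True
    then have "C \<le> real_of_ereal (val (coeff Q i))" unfolding C_def by (intro Min_le) auto
    then show ?thesis by (cases "val (coeff Q i)") auto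
  qed (simp add: coeff_eq_0)
  then show thesis using that by blast
qed

lemma newton_fun_bounded_below:
  obtains C where "\<And>x. ereal C \<le> newton_fun val Q x"
proof -
  obtain C where "\<And>i. ereal C \<le> val (coeff Q i)" using coeff_bounded_below by blast
  then have "ereal C \<le> newton_fun val Q x" for x
    using newton_fun_greatest[of Q "\<lambda>_. ereal C"] conv_fun_affine[of _ C 0] by simp
  then show thesis using that by blast
qed

lemma conv_fun_newton_fun: "conv_fun (real (degree Q)) (newton_fun val Q)"
proof -
  obtain C where "\<And>x. ereal C \<le> newton_fun val Q x" using newton_fun_bounded_below by blast
  then have "newton_fun val Q x \<noteq> -\<infinity>" for x by (metis MInfty_neq_ereal(1) ereal_infty_less_eq(2))
  then show ?thesis unfolding conv_fun_def using newton_fun_convex by blast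
qed

lemma newton_fun_degree:
  assumes "Q \<noteq> 0" shows "newton_fun val Q (real (degree Q)) = val (lead_coeff Q)"
proof (rule antisym)
  show "newton_fun val Q (real (degree Q)) \<le> val (lead_coeff Q)" by (rule newton_fun_le_coeff) simp
  obtain v where v: "val (lead_coeff Q) = ereal v" using assms val_finite[of "lead_coeff Q"] by auto
  obtain C where C: "\<And>i. ereal C \<le> val (coeff Q i)" using coeff_bounded_below by blast
  define M where "M = max 0 (v - C)"
  \<comment> \<open>a line through the leading point, steep enough to pass below all other coefficients\<close>
  have "ereal (v + M * (real i - real (degree Q))) \<le> val (coeff Q i)" if "i \<le> degree Q" for i
  proof (cases "i = degree Q")
    case False
    with that have "real i - real (degree Q) \<le> - 1" by linarith
    then have "M * (real i - real (degree Q)) \<le> - M"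
      using mult_left_mono[of _ "- 1" M] by (simp add: M_def)
    then have "v + M * (real i - real (degree Q)) \<le> C" by (simp add: M_def)
    then show ?thesis using C[of i] by (meson ereal_less_eq(3) order_trans)
  qed (use v in simp)
  then have "ereal ((v - M * real (degree Q)) + M * real (degree Q))
      \<le> newton_fun val Q (real (degree Q))"
    by (intro newton_fun_greatest conv_fun_affine) (simp add: algebra_simps)
  then show "val (lead_coeff Q) \<le> newton_fun val Q (real (degree Q))" using v by simp
qed

lemma nf_slope_newton_fun:
  assumes "i < degree B" "coeff B i \<noteq> 0"
  obtains lam where "nf_slope (real (degree B)) (newton_fun val B) = ereal lam"
proof -
  let ?\<psi> = "newton_fun val B"
  have B: "B \<noteq> 0" using assms by auto
  have "?\<psi> (real i) \<noteq> -\<infinity>" "?\<psi> (real (degree B) - 1) \<noteq> -\<infinity>"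
    using conv_fun_newton_fun[of B] assms unfolding conv_fun_def by auto
  moreover obtain r where "val (coeff B i) = ereal r" using val_finite[OF assms(2)] .
  then have "?\<psi> (real i) \<noteq> \<infinity>"
    using newton_fun_le_coeff[of i B val] assms by auto
  ultimately obtain a where a: "?\<psi> (real i) = ereal a" by (cases "?\<psi> (real i)") auto
  obtain b where b: "?\<psi> (real (degree B)) = ereal b"
    using newton_fun_degree[OF B] val_finite B by (metis leading_coeff_0_iff)
  have "?\<psi> (real (degree B) - 1)
      \<le> ereal (a + (b - a) * ((real (degree B) - 1 - real i) / (real (degree B) - real i)))"
    by (rule conv_fun_le_chord[OF conv_fun_newton_fun]) (use assms a b in auto)
  with \<open>?\<psi> (real (degree B) - 1) \<noteq> -\<infinity>\<close> show thesis
    using that b unfolding nf_slope_def by (cases "?\<psi> (real (degree B) - 1)") auto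
qed

lemma nondegenerate_lead_coeff:
  assumes "Q \<noteq> 0" "nondegenerate val Q \<phi>"
  shows "val (lead_coeff Q) < \<phi> (real (degree Q))"
proof -
  obtain v where v: "val (lead_coeff Q) = ereal v"
    using assms(1) val_finite[of "lead_coeff Q"] by auto
  then have "(real (degree Q), v) extreme_point_of newton_polygon val Q"
    using newton_fun_degree[OF assms(1)] by (intro extreme_point_newton_polygon_degree) simp
  then show ?thesis using assms(2) v unfolding nondegenerate_def by fastforce
qed

lemma newton_minorant_newton_fun:
  "B \<noteq> 0 \<Longrightarrow> newton_minorant val B (newton_fun val B)"
  unfolding newton_minorant_def
  by (simp add: conv_fun_newton_fun newton_fun_le_coeff newton_fun_degree)

lemma coeffs_ge_diff: "coeffs_ge val M P f \<Longrightarrow> coeffs_ge val M Q f \<Longrightarrow> coeffs_ge val M (P - Q) f"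
  unfolding coeffs_ge_def by (simp add: val_diff_ge)

lemma coeffs_ge_mult:
  assumes P: "coeffs_ge val m P f" "degree P \<le> m" and Q: "coeffs_ge val n Q g" "degree Q \<le> n"
  shows "coeffs_ge val (m + n) (P * Q) (conv_times (real m) (real n) f g)"
  unfolding coeffs_ge_def coeff_mult
proof (intro allI impI val_sum_ge)
  fix k j assume "k \<le> m + n" "j \<in> {..k}"
  show "conv_times (real m) (real n) f g (real k) \<le> val (coeff P j * coeff Q (k - j))"
  proof (cases "j \<le> m \<and> k - j \<le> n")
    case True
    then have "conv_times (real m) (real n) f g (real j + real (k - j))
        \<le> f (real j) + g (real (k - j))"
      by (intro conv_times_le) auto
    also have "\<dots> \<le> val (coeff P j) + val (coeff Q (k - j))"
      using P Q True unfolding coeffs_ge_def by (intro add_mono) auto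
    finally show ?thesis using \<open>j \<in> {..k}\<close> by (simp add: val_mult)
  next
    case False
    then have "val (coeff P j * coeff Q (k - j)) = \<infinity>" using P(2) Q(2) by (auto simp: coeff_eq_0)
    then show ?thesis by simp
  qed
qed

lemma coeffs_ge_diff_mult:
  assumes "coeffs_ge val n \<delta>A \<phi>A" "degree \<delta>A \<le> n" "coeffs_ge val d \<delta>B \<phi>B" "degree \<delta>B \<le> d"
    and "coeffs_ge val (n - d) Q \<phi>Q" "degree Q \<le> n - d" "d \<le> n"
  shows "coeffs_ge val n (\<delta>A - Q * \<delta>B)
      (conv_plus (real n) \<phi>A (conv_times (real d) (real n - real d) \<phi>B \<phi>Q))"
proof (rule coeffs_ge_diff)
  show "coeffs_ge val n \<delta>A (conv_plus (real n) \<phi>A (conv_times (real d) (real n - real d) \<phi>B \<phi>Q))"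
    using assms(1) by (rule coeffs_ge_mono) (simp add: conv_plus_le_left)
  have "coeffs_ge val (d + (n - d)) (\<delta>B * Q) (conv_times (real d) (real (n - d)) \<phi>B \<phi>Q)"
    using assms(3-6) by (rule coeffs_ge_mult)
  then have "coeffs_ge val n (Q * \<delta>B) (conv_times (real d) (real n - real d) \<phi>B \<phi>Q)"
    using assms(7) by (simp add: of_nat_diff mult.commute)
  then show "coeffs_ge val n (Q * \<delta>B)
      (conv_plus (real n) \<phi>A (conv_times (real d) (real n - real d) \<phi>B \<phi>Q))"
    by (rule coeffs_ge_mono) (simp add: conv_plus_le_right)
qed

section \<open>Newton bounds for quotient and remainder\<close>

lemma coeff_monom_mult_ge:
  assumes "B \<noteq> 0"
    and above: "\<And>i. i \<le> degree B \<Longrightarrow>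
      val (lead_coeff B) + ereal (lam * (real i - real (degree B))) \<le> val (coeff B i)"
    and F_slope: "\<And>k m. k \<le> m \<Longrightarrow> F k + ereal (lam * (real m - real k)) \<le> F m"
    and "degree B \<le> m" and F_m: "F m \<le> val (lead_coeff B) + val c"
  shows "F k \<le> val (coeff (monom c (m - degree B) * B) k)"
proof -
  define i where "i = k - (m - degree B)"
  have coeff: "coeff (monom c (m - degree B) * B) k =
      (if k < m - degree B then 0 else c * coeff B i)"
    by (simp add: coeff_monom_mult i_def)
  consider "k < m - degree B" | "m < k" | "m - degree B \<le> k" "k \<le> m" by linarith
  then show ?thesis
  proof cases
    case 2
    then have "coeff B i = 0" using \<open>degree B \<le> m\<close> by (intro coeff_eq_0) (simp add: i_def)
    then show ?thesis using coeff by simp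
  next
    case 3
    obtain b where b: "val (lead_coeff B) = ereal b"
      using assms(1) val_finite[of "lead_coeff B"] by auto
    have i: "i \<le> degree B" "lam * (real i - real (degree B)) = - (lam * (real m - real k))"
      using 3 \<open>degree B \<le> m\<close> by (simp_all add: i_def of_nat_diff algebra_simps)
    have "F k \<le> F m - ereal (lam * (real m - real k))"
      using F_slope[OF \<open>k \<le> m\<close>] by (simp add: ereal_le_minus)
    also have "\<dots> \<le> val (lead_coeff B) + val c - ereal (lam * (real m - real k))"
      using F_m by (simp add: ereal_minus_mono)
    also have "\<dots> = val c + (val (lead_coeff B) + ereal (lam * (real i - real (degree B))))"
      using b i(2) by (cases "val c") simp_all
    also have "\<dots> \<le> val c + val (coeff B i)"
      using above[OF i(1)] by (simp add: add_left_mono)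
    finally show ?thesis using coeff 3 by (simp add: val_mult)
  qed (simp add: coeff)
qed

lemma coeff_div_ge:
  assumes B: "B \<noteq> 0"
    and above: "\<And>i. i \<le> degree B \<Longrightarrow>
      val (lead_coeff B) + ereal (lam * (real i - real (degree B))) \<le> val (coeff B i)"
    and F_slope: "\<And>k m. k \<le> m \<Longrightarrow> F k + ereal (lam * (real m - real k)) \<le> F m"
    and F_le: "\<And>k. F k \<le> val (coeff P k)"
  shows "F (j + degree B) - val (lead_coeff B) \<le> val (coeff (P div B) j)"
  using F_le
proof (induction "degree P" arbitrary: P j rule: less_induct)
  case less
  show ?case
  proof (cases "degree B \<le> degree P \<and> P \<noteq> 0")
    case False
    then have "P div B = 0" by (auto intro: div_poly_less)
    then show ?thesis by simp
  next
    case True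
    define c where "c = lead_coeff P / lead_coeff B"
    define M where "M = monom c (degree P - degree B) * B"
    define P' where "P' = P - M"
    have c: "val (lead_coeff B) + val c = val (lead_coeff P)"
      using B by (simp add: c_def flip: val_mult)
    have M_ge: "F k \<le> val (coeff M k)" for k
      unfolding M_def using True c less.prems[of "degree P"]
      by (intro coeff_monom_mult_ge[OF B above F_slope]) simp_all
    have P'_bound: "F (j + degree B) - val (lead_coeff B) \<le> val (coeff (P' div B) j)"
    proof (cases "P' = 0")
      case False
      then have "degree P' < degree P"
        using degree_division_step_less[OF B] True unfolding P'_def M_def c_def by blast
      then show ?thesis
        using less.hyps val_diff_ge[OF less.prems M_ge] unfolding P'_def by simp
    qed simp
    have monom_bound:
      "F (j + degree B) - val (lead_coeff B) \<le> val (coeff (monom c (degree P - degree B)) j)"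
    proof (cases "j = degree P - degree B")
      case True
      obtain b where "val (lead_coeff B) = ereal b" using B val_finite[of "lead_coeff B"] by auto
      with c less.prems[of "degree P"] \<open>degree B \<le> degree P \<and> P \<noteq> 0\<close> True show ?thesis
        by (simp add: ereal_minus_le_iff add.commute)
    qed simp
    have "P div B = monom c (degree P - degree B) + P' div B"
      using B by (simp add: P'_def M_def div_mult_self1[symmetric])
    then show ?thesis using val_add_ge[OF monom_bound P'_bound] by simp
  qed
qed

lemma nf_div_le_coeff_div:
  assumes B: "newton_minorant val B \<psi>" "degree B = d" "1 \<le> d"
    and slope: "nf_slope (real d) \<psi> = ereal lam"
    and P: "coeffs_ge val n P \<phi>" "degree P \<le> n"
  shows "nf_div (real n) (real d) \<phi> \<psi> (real j) \<le> val (coeff (P div B) j)"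
proof -
  define F where "F k = slope_minorant (real n) lam \<phi> (real k)" for k
  have "F (j + degree B) - val (lead_coeff B) \<le> val (coeff (P div B) j)"
  proof (rule coeff_div_ge)
    show "B \<noteq> 0" using B(2,3) by auto
    show "val (lead_coeff B) + ereal (lam * (real i - real (degree B))) \<le> val (coeff B i)"
      if "i \<le> degree B" for i
      using newton_minorant_above_last_slope[OF B(1) _ _ that] B(2,3) slope by simp
    show "F k + ereal (lam * (real m - real k)) \<le> F m" if "k \<le> m" for k m
      using slope_minorant_increment[of "real m - real k" n lam \<phi> "real k"] that
      by (simp add: F_def)
    show "F k \<le> val (coeff P k)" for k
    proof (cases "k \<le> n")
      case True
      then show ?thesis
        using slope_minorant_le[of "real k" "real n" lam \<phi>] P(1) order_trans
        unfolding F_def coeffs_ge_def by fastforce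
    qed (use P(2) in \<open>simp add: coeff_eq_0\<close>)
  qed
  then show ?thesis
    using B(1,2) nf_div_eq_slope_minorant[OF slope]
    unfolding F_def newton_minorant_def by (simp add: add.commute)
qed

lemma nf_mod_le_coeff_mod:
  assumes B: "newton_minorant val B \<psi>" "degree B = d" "1 \<le> d" "d \<le> n"
    and slope: "nf_slope (real d) \<psi> = ereal lam"
    and lower: "\<And>x. x \<in> {real d..real n} \<Longrightarrow> ereal C \<le> \<phi> x"
    and P: "coeffs_ge val n P \<phi>" "degree P \<le> n"
  shows "coeffs_ge val (d - 1) (P mod B) (nf_mod (real n) (real d) \<phi> \<psi>)"
  unfolding coeffs_ge_def
proof (intro allI impI)
  have conv: "conv_fun (real d) \<psi>" and \<psi>_le: "\<And>i. i \<le> d \<Longrightarrow> \<psi> (real i) \<le> val (coeff B i)"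
    using B(1,2) unfolding newton_minorant_def by auto
  obtain b where b: "\<psi> (real d) = ereal b"
    using conv_fun_last_values[OF conv B(3) slope] by metis
  obtain c where delta: "nf_delta (real n) (real d) \<phi> \<psi> = ereal (c - b)"
    and line: "\<And>x. x \<in> {real d..real n} \<Longrightarrow> ereal (c + lam * (x - real d)) \<le> \<phi> x"
    using nf_delta_affine_minorant[of "real d" "real n" C \<phi>, OF lower slope b] by blast
  have quotient: "ereal (c + lam * real j - b) \<le> val (coeff (P div B) j)" for j
    using nf_div_ge_affine[OF line slope b] nf_div_le_coeff_div[OF B(1,2,3) slope P]
    by (meson of_nat_0_le_iff order_trans)
  fix i assume i: "i \<le> d - 1"
  define m where "m = nf_mod (real n) (real d) \<phi> \<psi> (real i)"
  have i_in: "real i \<in> {0..real d - 1}" using i B(3) by auto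
  have m_\<phi>: "m \<le> \<phi> (real i)" and m_\<psi>: "m \<le> \<psi> (real i) + ereal (c - b)"
    using conv_plus_le_left[OF i_in] conv_plus_le_right[OF i_in] delta
    unfolding m_def nf_mod_def by auto
  have "m \<le> val (coeff P i)"
    using m_\<phi> P(1) i B(4) unfolding coeffs_ge_def by (meson le_diff_conv order_trans trans_le_add1)
  moreover have "m \<le> val (coeff (P div B * B) i)"
    unfolding coeff_mult
  proof (rule val_sum_ge)
    fix j assume j: "j \<in> {..i}"
    have "\<psi> (real i) \<le> \<psi> (real (i - j)) + ereal (lam * real j)"
      using conv_fun_below_last_slope[OF conv B(3) slope, of "i - j" i] i j B(3)
      by (auto simp: of_nat_diff)
    then have "m \<le> \<psi> (real (i - j)) + ereal (lam * real j) + ereal (c - b)"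
      using m_\<psi> by (meson add_right_mono order_trans)
    also have "\<dots> = \<psi> (real (i - j)) + ereal (c + lam * real j - b)"
      by (cases "\<psi> (real (i - j))") (simp_all add: algebra_simps)
    also have "\<dots> \<le> val (coeff B (i - j)) + val (coeff (P div B) j)"
      using \<psi>_le[of "i - j"] quotient[of j] i j B(3) by (intro add_mono) auto
    finally show "m \<le> val (coeff (P div B) j * coeff B (i - j))" by (simp add: val_mult add.commute)
  qed
  ultimately show "nf_mod (real n) (real d) \<phi> \<psi> (real i) \<le> val (coeff (P mod B) i)"
    using val_diff_ge unfolding m_def by (simp flip: minus_div_mult_eq_mod)
qed

section \<open>Perturbation of the dividend and the divisor\<close>

lemma newton_minorant_perturb:
  assumes B: "newton_minorant val B \<psi>"
    and \<delta>B: "degree \<delta>B \<le> degree B" "coeffs_ge val (degree B) \<delta>B \<phi>B"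
    and \<psi>_le: "\<And>i. i \<le> degree B \<Longrightarrow> \<psi> (real i) \<le> \<phi>B (real i)"
    and lead: "val (lead_coeff B) < \<phi>B (real (degree B))"
  shows "degree (B + \<delta>B) = degree B" "newton_minorant val (B + \<delta>B) \<psi>"
proof -
  have "val (lead_coeff B) < val (coeff \<delta>B (degree B))"
    using lead \<delta>B(2) unfolding coeffs_ge_def by (meson order_less_le_trans order_refl)
  then have lead_eq: "val (coeff (B + \<delta>B) (degree B)) = val (lead_coeff B)"
    by (simp add: val_add_eq_left)
  then have "coeff (B + \<delta>B) (degree B) \<noteq> 0" using lead by auto
  then have "degree B \<le> degree (B + \<delta>B)" by (rule le_degree)
  moreover have "degree (B + \<delta>B) \<le> degree B" using \<delta>B(1) by (simp add: degree_add_le)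
  ultimately show deg: "degree (B + \<delta>B) = degree B" by simp
  have "\<psi> (real i) \<le> val (coeff (B + \<delta>B) i)" if "i \<le> degree B" for i
    using B \<psi>_le[OF that] \<delta>B(2) that unfolding newton_minorant_def coeffs_ge_def
    by (auto intro: val_add_ge order_trans)
  with B lead_eq deg show "newton_minorant val (B + \<delta>B) \<psi>"
    unfolding newton_minorant_def by simp
qed

lemma coeffs_ge_perturbation_numerator:
  assumes B: "newton_minorant val B \<psi>" "degree B = d" "1 \<le> d" "d \<le> degree A"
    and slope: "nf_slope (real d) \<psi> = ereal lam"
    and \<delta>: "degree \<delta>A \<le> degree A" "coeffs_ge val (degree A) \<delta>A \<phi>A"
      "degree \<delta>B \<le> d" "coeffs_ge val d \<delta>B \<phi>B"
  shows "coeffs_ge val (degree A) (\<delta>A - A div B * \<delta>B) (conv_plus (real (degree A)) \<phi>A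
      (conv_times (real d) (real (degree A) - real d) \<phi>B
        (nf_div (real (degree A)) (real d) (newton_fun val A) \<psi>)))"
    and "degree (\<delta>A - A div B * \<delta>B) \<le> degree A"
proof -
  have "coeffs_ge val (degree A - d) (A div B)
      (nf_div (real (degree A)) (real d) (newton_fun val A) \<psi>)"
    using nf_div_le_coeff_div[OF B(1-3) slope, of "degree A" A]
    unfolding coeffs_ge_def by (simp add: newton_fun_le_coeff)
  moreover have "degree (A div B) \<le> degree A - d" using degree_div_le[of A B] B(2) by simp
  ultimately show "coeffs_ge val (degree A) (\<delta>A - A div B * \<delta>B) (conv_plus (real (degree A)) \<phi>A
      (conv_times (real d) (real (degree A) - real d) \<phi>B
        (nf_div (real (degree A)) (real d) (newton_fun val A) \<psi>)))"
    using \<delta> B(4) by (intro coeffs_ge_diff_mult)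
  show "degree (\<delta>A - A div B * \<delta>B) \<le> degree A"
    using degree_mult_le[of "A div B" \<delta>B] degree_div_le[of A B] B(2,4) \<delta>(1,3)
    by (intro degree_diff_le) linarith+
qed

lemma precision_bounded_below:
  assumes "nondegenerate val A \<phi>A" "nondegenerate val B \<phi>B" "B \<noteq> 0"
    and slope: "nf_slope (real (degree B)) (newton_fun val B) = ereal lam"
  obtains C where "\<And>x. ereal C \<le> conv_plus (real (degree A)) \<phi>A
    (conv_times (real (degree B)) (real (degree A) - real (degree B)) \<phi>B
      (nf_div (real (degree A)) (real (degree B)) (newton_fun val A) (newton_fun val B))) x"
proof -
  obtain CA where CA: "\<And>x. ereal CA \<le> newton_fun val A x"
    using newton_fun_bounded_below[of A] by blast
  obtain CB where CB: "\<And>x. ereal CB \<le> newton_fun val B x"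
    using newton_fun_bounded_below[of B] by blast
  obtain b where b: "newton_fun val B (real (degree B)) = ereal b"
    using newton_fun_degree[OF assms(3)] val_finite[of "lead_coeff B"] assms(3) by auto
  define C where "C = min CA (CB + (CA - \<bar>lam\<bar> * real (degree A) - b))"
  have "ereal CB \<le> \<phi>B y" if "y \<in> {0..real (degree B)}" for y
    using assms(2) CB[of y] that unfolding nondegenerate_def by (meson order_trans)
  moreover have "ereal (CA - \<bar>lam\<bar> * real (degree A) - b)
      \<le> nf_div (real (degree A)) (real (degree B)) (newton_fun val A) (newton_fun val B) z"
    if "z \<in> {0..real (degree A) - real (degree B)}" for z
    using that by (intro nf_div_bounded_below[OF CA slope b]) auto
  ultimately have X: "ereal (CB + (CA - \<bar>lam\<bar> * real (degree A) - b)) \<le>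
      conv_times (real (degree B)) (real (degree A) - real (degree B)) \<phi>B
        (nf_div (real (degree A)) (real (degree B)) (newton_fun val A) (newton_fun val B)) x" for x
    by (rule conv_times_ge)
  have \<phi>A: "ereal CA \<le> \<phi>A y" if "y \<in> {0..real (degree A)}" for y
    using assms(1) CA[of y] that unfolding nondegenerate_def by (meson order_trans)
  have "ereal C \<le> ereal CA" "ereal C \<le> ereal (CB + (CA - \<bar>lam\<bar> * real (degree A) - b))"
    by (simp_all add: C_def)
  then show thesis
    using X \<phi>A by (intro that[of C] conv_plus_ge_const) (meson order_trans)
qed

end

theorem proposition3p3:
  fixes val :: "'a::field \<Rightarrow> ereal"
    and A_app B_app :: "'a poly"
    and \<phi>A \<phi>B :: "real \<Rightarrow> ereal"
  defines "n \<equiv> degree A_app"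
    and "d \<equiv> degree B_app"
  defines "\<phi> \<equiv> conv_plus (real n) \<phi>A
              (conv_times (real d) (real n - real d) \<phi>B
                 (nf_div (real n) (real d) (newton_fun val A_app) (newton_fun val B_app)))"
  assumes K: "complete_dvf val"
    and deg: "n \<ge> d" "d \<ge> 1"
    and low: "\<exists>i<d. coeff B_app i \<noteq> 0"
    and NA: "newton_function n \<phi>A"
    and NB: "newton_function d \<phi>B"
    and ndA: "nondegenerate val A_app \<phi>A"
    and ndB: "nondegenerate val B_app \<phi>B"
  shows "\<forall>\<delta>A \<delta>B. degree \<delta>A \<le> n \<and> degree \<delta>B \<le> d \<and>
            coeffs_ge val n \<delta>A \<phi>A \<and> coeffs_ge val d \<delta>B \<phi>B \<longrightarrow>
            coeffs_ge val (n - d) ((A_app + \<delta>A) div (B_app + \<delta>B) - A_app div B_app)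
              (nf_div (real n) (real d) \<phi> (newton_fun val B_app)) \<and>
            coeffs_ge val (d - 1) ((A_app + \<delta>A) mod (B_app + \<delta>B) - A_app mod B_app)
              (nf_mod (real n) (real d) \<phi> (newton_fun val B_app))"
proof (intro allI impI, elim conjE)
  fix \<delta>A \<delta>B :: "'a poly"
  assume \<delta>: "degree \<delta>A \<le> n" "degree \<delta>B \<le> d" "coeffs_ge val n \<delta>A \<phi>A" "coeffs_ge val d \<delta>B \<phi>B"
  interpret discrete_valued val using K unfolding complete_dvf_def discrete_valued_def by blast
  define \<psi> where "\<psi> = newton_fun val B_app"
  have dB: "degree B_app = d" by (simp add: d_def)
  have B0: "B_app \<noteq> 0" using deg(2) unfolding d_def by auto
  then have B: "newton_minorant val B_app \<psi>"
    using newton_minorant_newton_fun unfolding \<psi>_def by auto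
  obtain lam where slope: "nf_slope (real d) \<psi> = ereal lam"
    using low nf_slope_newton_fun unfolding d_def \<psi>_def by blast
  have B': "degree (B_app + \<delta>B) = d" "newton_minorant val (B_app + \<delta>B) \<psi>"
    using newton_minorant_perturb[OF B] \<delta>(2,4) ndB nondegenerate_lead_coeff[OF B0 ndB]
    unfolding nondegenerate_def \<psi>_def d_def by auto
  define P where "P = \<delta>A - A_app div B_app * \<delta>B"
  have P: "coeffs_ge val n P \<phi>" "degree P \<le> n"
    using coeffs_ge_perturbation_numerator[OF B dB deg(2) _ slope] \<delta> deg(1)
    unfolding P_def \<phi>_def \<psi>_def n_def by simp_all
  obtain C where C: "\<And>x. ereal C \<le> \<phi> x"
    using precision_bounded_below[OF ndA ndB B0] slope unfolding \<phi>_def \<psi>_def n_def d_def by blast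
  have "coeffs_ge val (n - d) (P div (B_app + \<delta>B)) (nf_div (real n) (real d) \<phi> \<psi>)"
    using nf_div_le_coeff_div[OF B'(2,1) deg(2) slope P] unfolding coeffs_ge_def by blast
  moreover have "coeffs_ge val (d - 1) (P mod (B_app + \<delta>B)) (nf_mod (real n) (real d) \<phi> \<psi>)"
    using C by (intro nf_mod_le_coeff_mod[OF B'(2,1) deg(2,1) slope _ P])
  moreover have "B_app + \<delta>B \<noteq> 0" using B'(1) deg(2) by auto
  ultimately show "coeffs_ge val (n - d) ((A_app + \<delta>A) div (B_app + \<delta>B) - A_app div B_app)
      (nf_div (real n) (real d) \<phi> (newton_fun val B_app)) \<and>
    coeffs_ge val (d - 1) ((A_app + \<delta>A) mod (B_app + \<delta>B) - A_app mod B_app)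
      (nf_mod (real n) (real d) \<phi> (newton_fun val B_app))"
    using div_mod_perturbation[OF B0, of \<delta>B A_app \<delta>A] B'(1) dB unfolding P_def \<psi>_def by simp
qed

end
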